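(* Let $\mathcal U$ be a finite set and $R$ an $n(R)$-place relation on $\mathcal U$ with $\lambda_1(R)\cdot n(R)^2+n(R)<|\mathcal U|$. There are a set $A\subseteq\mathcal U$ and a sequence $\bar C=\langle C_\ell:\ell<n(R)-2\rangle$ of subsets of $\mathcal U$ such that: (A) $|A|\le n(R)\cdot n(R)\cdot\lambda_1(R)$; (B) if $\bar b,\bar c$ are $n(R)$-tuples from $\mathcal U$ with $b_i=b_j\iff c_i=c_j$ for all $i,j$, and $b_i\,E_{A,\bar C}\,c_i$ for all $i<n(R)$, then $R(\bar b)\iff R(\bar c)$; (C) $E_A$ has at most $|A|+\lambda_1(R)$ equivalence classes; (D) each $C_\ell$ has at most $\lambda_1(R)$ elements.
   Context: $\mathrm{tp}_{\mathrm{bs}}(a,A,R)$ (for $a\in\mathcal U$, $A\subseteq\mathcal U$) is the set of formulas $\varphi(x,\bar a)$, with $\bar a$ from $A$ and $\varphi$ atomic or negated atomic in the vocabulary $\{R,=\}$, such that $(\mathcal U,R)\models\varphi(a,\bar a)$. $\lambda_1(R)=\max_{A\subseteq\mathcal U}|\{\mathrm{tp}_{\mathrm{bs}}(a,A,R):a\in\mathcal U\setminus A\}|$. For $A\subseteq\mathcal U$, $E_A$ is the equivalence relation on $\mathcal U$: $a\,E_A\,b$ iff $\mathrm{tp}_{\mathrm{bs}}(a,A,R)=\mathrm{tp}_{\mathrm{bs}}(b,A,R)$. For $A\subseteq\mathcal U$ and $\bar C=\langle C_\ell:\ell<k\rangle$ with $C_\ell\subseteq\mathcal U$, $a\,E_{A,\bar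 C}\,b$ iff $a\,E_A\,b$ and, for every $\ell<k$, $a\in C_\ell\iff b\in C_\ell$. *)

theory Defs
  imports Main
begin

text \<open>Terms of basic formulas in one free variable x with parameters.\<close>
datatype 'a tm = Var | Par 'a

datatype 'a atom = Eq "'a tm" "'a tm" | Rel "'a tm list"

datatype 'a lit = Pos "'a atom" | Neg "'a atom"

fun tm_val :: "'a \<Rightarrow> 'a tm \<Rightarrow> 'a" where
  "tm_val a Var = a"
| "tm_val a (Par p) = p"

fun tm_params :: "'a tm \<Rightarrow> 'a set" where
  "tm_params Var = {}"
| "tm_params (Par p) = {p}"

fun atom_params :: "'a atom \<Rightarrow> 'a set" where
  "atom_params (Eq s t) = tm_params s \<union> tm_params t"
| "atom_params (Rel ts) = (\<Union>t\<in>set ts. tm_params t)"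

fun lit_params :: "'a lit \<Rightarrow> 'a set" where
  "lit_params (Pos f) = atom_params f"
| "lit_params (Neg f) = atom_params f"

fun atom_wf :: "nat \<Rightarrow> 'a atom \<Rightarrow> bool" where
  "atom_wf n (Eq s t) = True"
| "atom_wf n (Rel ts) = (length ts = n)"

fun lit_wf :: "nat \<Rightarrow> 'a lit \<Rightarrow> bool" where
  "lit_wf n (Pos f) = atom_wf n f"
| "lit_wf n (Neg f) = atom_wf n f"

fun atom_holds :: "'a list set \<Rightarrow> 'a \<Rightarrow> 'a atom \<Rightarrow> bool" where
  "atom_holds R a (Eq s t) = (tm_val a s = tm_val a t)"
| "atom_holds R a (Rel ts) = (map (tm_val a) ts \<in> R)"

fun lit_holds :: "'a list set \<Rightarrow> 'a \<Rightarrow> 'a lit \<Rightarrow> bool" where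
  "lit_holds R a (Pos f) = atom_holds R a f"
| "lit_holds R a (Neg f) = (\<not> atom_holds R a f)"

definition is_relation :: "'a set \<Rightarrow> nat \<Rightarrow> 'a list set \<Rightarrow> bool" where
  "is_relation U n R \<longleftrightarrow> (\<forall>xs\<in>R. length xs = n \<and> set xs \<subseteq> U)"

definition tp_bs :: "nat \<Rightarrow> 'a list set \<Rightarrow> 'a \<Rightarrow> 'a set \<Rightarrow> 'a lit set" where
  "tp_bs n R a A = {\<phi>. lit_wf n \<phi> \<and> lit_params \<phi> \<subseteq> A \<and> lit_holds R a \<phi>}"

definition lambda1 :: "'a set \<Rightarrow> nat \<Rightarrow> 'a list set \<Rightarrow> nat" where
  "lambda1 U n R = Max {card ((\<lambda>a. tp_bs n R a A) ` (U - A)) | A. A \<subseteq> U}"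

definition E_rel :: "'a set \<Rightarrow> nat \<Rightarrow> 'a list set \<Rightarrow> 'a set \<Rightarrow> ('a \<times> 'a) set" where
  "E_rel U n R A = {(a, b). a \<in> U \<and> b \<in> U \<and> tp_bs n R a A = tp_bs n R b A}"

definition E_rel_C :: "'a set \<Rightarrow> nat \<Rightarrow> 'a list set \<Rightarrow> 'a set \<Rightarrow> nat \<Rightarrow> (nat \<Rightarrow> 'a set) \<Rightarrow> ('a \<times> 'a) set" where
  "E_rel_C U n R A k C = {(a, b). (a, b) \<in> E_rel U n R A \<and> (\<forall>l<k. a \<in> C l \<longleftrightarrow> b \<in> C l)}"

end

theory Submission
  imports Defs "HOL-Combinatorics.Transposition"
begin

(* Call u and v indiscernible if no basic literal with parameters outside {u, v} tells them apart.
   Grow a base B, keeping a bound m on the number of parameters outside B of a literal separating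
   two elements of the same type over B; initially m = n - 1, as such a literal must be an R-atom
   containing the variable. While some separating literal has no parameter whose whole class over B
   lies among its parameters, adding its parameters to B splits a class without exhausting any, so the
   number of types over B, at most lambda1, grows. When this is no longer possible, adding all classes
   of size at most m lowers the bound to m - 1. After n - 1 rounds, elements of the same type over B
   are indiscernible, and adding the classes of size at most n gives A whose nontrivial E_A-classes lie
   in sets of more than n pairwise indiscernible elements. Inside such a set every transposition
   preserves R (route it through an element missing from the tuple), and transposing the entries of b
   one at a time turns b into any c with the same equality pattern. *)

lemma finite_lit_params: "finite (lit_params \<psi>)"
proof -
  have "finite (tm_params t)" for t :: "'a tm"
    by (cases t) auto
  then have "finite (atom_params a)" for a :: "'a atom"
    by (cases a) auto
  then show ?thesis
    by (cases \<psi>) auto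
qed

lemma atom_params_Rel: "atom_params (Rel ts) = {p. Par p \<in> set ts}"
proof -
  have "tm_params t = {p. t = Par p}" for t :: "'a tm"
    by (cases t) auto
  then show ?thesis
    by auto
qed

lemma card_atom_params_Rel_le:
  assumes "Var \<in> set ts"
  shows "card (atom_params (Rel ts)) \<le> length ts - 1"
proof -
  have "card {p. Par p \<in> set ts} = card (Par ` {p. Par p \<in> set ts})"
    by (simp add: card_image inj_on_def)
  also have "\<dots> \<le> card (set ts - {Var})"
    by (intro card_mono) auto
  also have "\<dots> \<le> length ts - 1"
    using assms card_length[of ts] by simp
  finally show ?thesis
    by (simp only: atom_params_Rel)
qed

lemma card_params_separating_lit:
  assumes "lit_wf n \<psi>" and "u \<notin> lit_params \<psi>" and "v \<notin> lit_params \<psi>"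
    and "lit_holds R u \<psi> \<noteq> lit_holds R v \<psi>"
  shows "card (lit_params \<psi>) \<le> n - 1"
proof -
  obtain a where a: "\<psi> = Pos a \<or> \<psi> = Neg a"
    by (cases \<psi>) auto
  with assms have wf: "atom_wf n a" and params: "u \<notin> atom_params a" "v \<notin> atom_params a"
    and holds: "atom_holds R u a \<noteq> atom_holds R v a"
    by auto
  show ?thesis
  proof (cases a)
    case (Eq s t)
    with params holds show ?thesis
      by (cases s; cases t) auto
  next
    case (Rel ts)
    have "Var \<in> set ts"
    proof (rule ccontr)
      assume "Var \<notin> set ts"
      moreover have "tm_val u t = tm_val v t" if "t \<noteq> Var" for t
        using that by (cases t) auto
      ultimately have "map (tm_val u) ts = map (tm_val v) ts"
        by (metis map_cong)
      with holds Rel show False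
        by simp
    qed
    then show ?thesis
      using a wf Rel card_atom_params_Rel_le by auto
  qed
qed

lemma tp_bs_restrict:
  assumes "B \<subseteq> B'"
  shows "tp_bs n R x B = {\<phi> \<in> tp_bs n R x B'. lit_params \<phi> \<subseteq> B}"
  using assms unfolding tp_bs_def by auto

lemma tp_bs_eq_mono:
  assumes "B \<subseteq> B'" and "tp_bs n R x B' = tp_bs n R y B'"
  shows "tp_bs n R x B = tp_bs n R y B"
  using assms tp_bs_restrict by metis

lemma mem_tp_bs_iff:
  assumes "lit_wf n \<phi>" and "lit_params \<phi> \<subseteq> B"
  shows "\<phi> \<in> tp_bs n R x B \<longleftrightarrow> lit_holds R x \<phi>"
  using assms unfolding tp_bs_def by simp

lemma tp_bs_eq_imp_eq:
  assumes "x \<in> B" and "tp_bs n R x B = tp_bs n R y B"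
  shows "x = y"
proof -
  have "Pos (Eq Var (Par x)) \<in> tp_bs n R x B"
    using assms(1) by (simp add: tp_bs_def)
  with assms(2) show ?thesis
    by (simp add: tp_bs_def)
qed

lemma set_map_transpose_subset:
  assumes "set t \<subseteq> S" and "a \<in> S" and "b \<in> S"
  shows "set (map (transpose a b) t) \<subseteq> S"
  using assms by (auto simp: transpose_def)

lemma transpose_towards:
  fixes E :: "('a \<times> 'a) set"
  assumes "trans E" and "refl_on S E" and len: "length b = n" "length c = n" and "set c \<subseteq> S"
    and pattern: "\<forall>i<n. \<forall>j<n. b ! i = b ! j \<longleftrightarrow> c ! i = c ! j" and related: "\<forall>i<n. (b ! i, c ! i) \<in> E"
    and i: "i < n" "b ! i \<noteq> c ! i"
  defines "b' \<equiv> map (transpose (b ! i) (c ! i)) b"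
  shows "\<forall>j<n. \<forall>k<n. b' ! j = b' ! k \<longleftrightarrow> c ! j = c ! k"
    and "\<forall>j<n. (b' ! j, c ! j) \<in> E"
    and "card {j. j < n \<and> b' ! j \<noteq> c ! j} < card {j. j < n \<and> b ! j \<noteq> c ! j}"
proof -
  have same_class: "b ! j = b ! i \<longleftrightarrow> c ! j = c ! i" if "j < n" for j
    using pattern i that by blast
  have nth_b': "b' ! j = transpose (b ! i) (c ! i) (b ! j)" if "j < n" for j
    using that len by (simp add: b'_def)
  have "b' ! j = b' ! k \<longleftrightarrow> b ! j = b ! k" if "j < n" "k < n" for j k
    using that nth_b' transpose_eq_imp_eq by metis
  with pattern show "\<forall>j<n. \<forall>k<n. b' ! j = b' ! k \<longleftrightarrow> c ! j = c ! k"
    by simp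
  show "\<forall>j<n. (b' ! j, c ! j) \<in> E"
  proof (intro allI impI)
    fix j
    assume "j < n"
    then have "c ! j \<in> S"
      using \<open>set c \<subseteq> S\<close> len by auto
    then show "(b' ! j, c ! j) \<in> E"
      using same_class[OF \<open>j < n\<close>] related \<open>j < n\<close> i \<open>refl_on S E\<close> \<open>trans E\<close>
      by (auto simp: nth_b' transpose_def refl_on_def) (metis transD)
  qed
  have "{j. j < n \<and> b' ! j \<noteq> c ! j} \<subseteq> {j. j < n \<and> b ! j \<noteq> c ! j} - {i}"
    using same_class i by (auto simp: nth_b' transpose_eq_iff) (metis same_class)
  then have "card {j. j < n \<and> b' ! j \<noteq> c ! j} \<le> card ({j. j < n \<and> b ! j \<noteq> c ! j} - {i})"
    by (intro card_mono) auto
  also have "\<dots> < card {j. j < n \<and> b ! j \<noteq> c ! j}"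
    using i by (intro card_Diff1_less) auto
  finally show "card {j. j < n \<and> b' ! j \<noteq> c ! j} < card {j. j < n \<and> b ! j \<noteq> c ! j}" .
qed

lemma transposition_invariant_imp_pattern_invariant:
  fixes E :: "('a \<times> 'a) set"
  assumes "trans E" and "refl_on S E"
    and transposition_invariant:
      "\<And>t u v. length t = n \<Longrightarrow> set t \<subseteq> S \<Longrightarrow> (u, v) \<in> E \<Longrightarrow> P t \<longleftrightarrow> P (map (transpose u v) t)"
  shows "length b = n \<Longrightarrow> length c = n \<Longrightarrow> set b \<subseteq> S \<Longrightarrow> set c \<subseteq> S
    \<Longrightarrow> \<forall>i<n. \<forall>j<n. b ! i = b ! j \<longleftrightarrow> c ! i = c ! j \<Longrightarrow> \<forall>i<n. (b ! i, c ! i) \<in> E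
    \<Longrightarrow> P b \<longleftrightarrow> P c"
proof (induction "card {i. i < n \<and> b ! i \<noteq> c ! i}" arbitrary: b rule: less_induct)
  case less
  show ?case
  proof (cases "\<exists>i<n. b ! i \<noteq> c ! i")
    case False
    with less.prems(1,2) have "b = c"
      by (auto intro: nth_equalityI)
    then show ?thesis
      by simp
  next
    case True
    then obtain i where i: "i < n" "b ! i \<noteq> c ! i"
      by blast
    define b' where "b' = map (transpose (b ! i) (c ! i)) b"
    have "b ! i \<in> S" "c ! i \<in> S"
      using less.prems i by auto
    then have "set b' \<subseteq> S"
      unfolding b'_def using less.prems(3) by (rule set_map_transpose_subset[rotated])
    moreover have "length b' = n"
      using less.prems(1) by (simp add: b'_def)
    ultimately have "P b' \<longleftrightarrow> P c"
      using less.hyps transpose_towards[OF assms(1,2) less.prems(1,2,4,5,6) i] less.prems(2,4)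
      unfolding b'_def by blast
    moreover have "P b \<longleftrightarrow> P b'"
      unfolding b'_def using less.prems i by (intro transposition_invariant) auto
    ultimately show ?thesis
      by simp
  qed
qed

locale finite_universe =
  fixes U :: "'a set" and n :: nat and R :: "'a list set"
  assumes finite_U: "finite U"
begin

abbreviation tp :: "'a \<Rightarrow> 'a set \<Rightarrow> 'a lit set" where
  "tp a B \<equiv> tp_bs n R a B"

definition ntypes :: "'a set \<Rightarrow> nat" where
  "ntypes B = card ((\<lambda>a. tp a B) ` (U - B))"

definition tp_class :: "'a set \<Rightarrow> 'a \<Rightarrow> 'a set" where
  "tp_class B x = {y \<in> U - B. tp y B = tp x B}"

definition separates :: "'a \<Rightarrow> 'a \<Rightarrow> 'a lit \<Rightarrow> bool" where
  "separates u v \<psi> \<longleftrightarrow>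
     lit_wf n \<psi> \<and> lit_params \<psi> \<subseteq> U - {u, v} \<and> lit_holds R u \<psi> \<noteq> lit_holds R v \<psi>"

definition indiscernible :: "'a \<Rightarrow> 'a \<Rightarrow> bool" where
  "indiscernible u v \<longleftrightarrow> (\<nexists>\<psi>. separates u v \<psi>)"

definition params_bounded :: "'a set \<Rightarrow> nat \<Rightarrow> bool" where
  "params_bounded B m \<longleftrightarrow> (\<forall>u v \<psi>. u \<in> U - B \<longrightarrow> v \<in> tp_class B u \<longrightarrow> separates u v \<psi>
     \<longrightarrow> card (lit_params \<psi> - B) \<le> m)"

definition saturated :: "'a set \<Rightarrow> bool" where
  "saturated B \<longleftrightarrow> (\<forall>u v \<psi>. u \<in> U - B \<longrightarrow> v \<in> tp_class B u \<longrightarrow> separates u v \<psi>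
     \<longrightarrow> (\<exists>w \<in> lit_params \<psi> - B. tp_class B w \<subseteq> lit_params \<psi> - B))"

definition small_classes :: "nat \<Rightarrow> 'a set \<Rightarrow> 'a set" where
  "small_classes m B = {x \<in> U - B. card (tp_class B x) \<le> m}"

lemma ntypes_le_lambda1:
  assumes "B \<subseteq> U"
  shows "ntypes B \<le> lambda1 U n R"
proof -
  have "{card ((\<lambda>a. tp a A) ` (U - A)) | A. A \<subseteq> U} = (\<lambda>A. card ((\<lambda>a. tp a A) ` (U - A))) ` Pow U"
    by auto
  then have "finite {card ((\<lambda>a. tp a A) ` (U - A)) | A. A \<subseteq> U}"
    using finite_U by simp
  then show ?thesis
    unfolding ntypes_def lambda1_def by (rule Max_ge) (use assms in blast)
qed

lemma ntypes_strict_mono: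
  assumes "B \<subseteq> B'"
    and realized: "\<And>x. x \<in> U - B \<Longrightarrow> \<exists>y \<in> U - B'. tp y B = tp x B"
    and "u \<in> U - B'" and "v \<in> U - B'" and "tp u B = tp v B" and "tp u B' \<noteq> tp v B'"
  shows "ntypes B < ntypes B'"
proof -
  define restrict where "restrict \<Phi> = {\<phi> \<in> \<Phi>. lit_params \<phi> \<subseteq> B}" for \<Phi> :: "'a lit set"
  have restrict_tp: "restrict (tp x B') = tp x B" for x
    using tp_bs_restrict[OF assms(1)] by (simp add: restrict_def)
  let ?T = "(\<lambda>a. tp a B) ` (U - B)" and ?T' = "(\<lambda>a. tp a B') ` (U - B')"
  have "restrict ` ?T' = (\<lambda>a. tp a B) ` (U - B')"
    by (simp add: image_image restrict_tp)
  also have "\<dots> = ?T"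
  proof
    show "(\<lambda>a. tp a B) ` (U - B') \<subseteq> ?T"
      using assms(1) by auto
    show "?T \<subseteq> (\<lambda>a. tp a B) ` (U - B')"
    proof (rule image_subsetI)
      fix x
      assume "x \<in> U - B"
      then obtain y where "y \<in> U - B'" and "tp y B = tp x B"
        using realized by blast
      then show "tp x B \<in> (\<lambda>a. tp a B) ` (U - B')"
        by (metis image_eqI)
    qed
  qed
  finally have "restrict ` ?T' = ?T" .
  moreover have "\<not> inj_on restrict ?T'"
    using assms(3-6) by (auto simp: inj_on_def restrict_tp)
  moreover have "finite ?T'"
    using finite_U by simp
  ultimately have "card ?T < card ?T'"
    by (metis card_image_le inj_on_iff_eq_card order_le_imp_less_or_eq)
  then show ?thesis
    by (simp add: ntypes_def)
qed

lemma params_bounded_mono: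
  assumes "params_bounded B m" and "B \<subseteq> B'"
  shows "params_bounded B' m"
  unfolding params_bounded_def
proof (intro allI impI)
  fix u v \<psi>
  assume "u \<in> U - B'" and "v \<in> tp_class B' u" and "separates u v \<psi>"
  then have "card (lit_params \<psi> - B) \<le> m"
    using assms tp_bs_eq_mono[OF assms(2)] unfolding params_bounded_def tp_class_def by blast
  moreover have "card (lit_params \<psi> - B') \<le> card (lit_params \<psi> - B)"
    using assms(2) finite_lit_params by (intro card_mono) auto
  ultimately show "card (lit_params \<psi> - B') \<le> m"
    by simp
qed

lemma params_bounded_empty: "params_bounded {} (n - 1)"
  unfolding params_bounded_def
proof (intro allI impI)
  fix u v \<psi>
  assume "separates u v \<psi>"
  then have "card (lit_params \<psi>) \<le> n - 1"
    unfolding separates_def by (intro card_params_separating_lit[where R = R and u = u and v = v]) auto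
  then show "card (lit_params \<psi> - {}) \<le> n - 1"
    by simp
qed

lemma params_bounded_0_imp_indiscernible:
  assumes "params_bounded B 0" and "u \<in> U - B" and "v \<in> tp_class B u"
  shows "indiscernible u v"
  unfolding indiscernible_def
proof
  assume "\<exists>\<psi>. separates u v \<psi>"
  then obtain \<psi> where sep: "separates u v \<psi>"
    by blast
  with assms have "card (lit_params \<psi> - B) = 0"
    unfolding params_bounded_def by blast
  then have "lit_params \<psi> \<subseteq> B"
    using finite_lit_params[of \<psi>] by simp
  with sep have "\<psi> \<in> tp u B \<longleftrightarrow> \<psi> \<notin> tp v B"
    by (auto simp: separates_def mem_tp_bs_iff)
  with assms(3) show False
    by (simp add: tp_class_def)
qed

lemma exists_ntypes_increase:
  assumes "B \<subseteq> U" and "params_bounded B m" and "\<not> saturated B"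
  shows "\<exists>B'. B \<subseteq> B' \<and> B' \<subseteq> U \<and> card B' \<le> card B + m \<and> ntypes B < ntypes B'"
proof -
  from assms(3) obtain u v \<psi> where u: "u \<in> U - B" and v: "v \<in> tp_class B u" and sep: "separates u v \<psi>"
    and unswallowed: "\<forall>w \<in> lit_params \<psi> - B. \<not> tp_class B w \<subseteq> lit_params \<psi> - B"
    unfolding saturated_def by blast
  have params: "lit_params \<psi> \<subseteq> U - {u, v}" and wf: "lit_wf n \<psi>"
    and holds: "lit_holds R u \<psi> \<noteq> lit_holds R v \<psi>"
    using sep by (auto simp: separates_def)
  define B' where "B' = B \<union> lit_params \<psi>"
  have "B \<subseteq> B'" and "B' \<subseteq> U"
    using assms(1) params by (auto simp: B'_def)
  moreover have "card B' \<le> card B + m"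
  proof -
    have "card (lit_params \<psi> - B) \<le> m"
      using assms(2) u v sep unfolding params_bounded_def by blast
    then show ?thesis
      using card_Un_le[of B "lit_params \<psi> - B"] by (simp add: B'_def)
  qed
  moreover have "ntypes B < ntypes B'"
  proof (rule ntypes_strict_mono[OF \<open>B \<subseteq> B'\<close>])
    show "\<exists>y \<in> U - B'. tp y B = tp x B" if "x \<in> U - B" for x
    proof (cases "x \<in> lit_params \<psi>")
      case False
      with that show ?thesis
        by (auto simp: B'_def)
    next
      case True
      with that unswallowed have "\<not> tp_class B x \<subseteq> lit_params \<psi> - B"
        by blast
      then obtain y where "y \<in> tp_class B x" and "y \<notin> lit_params \<psi> - B"
        by blast
      then show ?thesis
        by (auto simp: tp_class_def B'_def)
    qed
    show "u \<in> U - B'" and "v \<in> U - B'" and "tp u B = tp v B"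
      using u v params by (auto simp: B'_def tp_class_def)
    have "\<psi> \<in> tp u B' \<longleftrightarrow> lit_holds R u \<psi>" and "\<psi> \<in> tp v B' \<longleftrightarrow> lit_holds R v \<psi>"
      using wf by (simp_all add: mem_tp_bs_iff B'_def)
    with holds show "tp u B' \<noteq> tp v B'"
      by auto
  qed
  ultimately show ?thesis
    by blast
qed

lemma exists_saturated_superset:
  assumes "B \<subseteq> U" and "params_bounded B m"
  shows "\<exists>B'. B \<subseteq> B' \<and> B' \<subseteq> U \<and> saturated B' \<and> card B' \<le> card B + m * (lambda1 U n R - ntypes B)"
  using assms
proof (induction "lambda1 U n R - ntypes B" arbitrary: B rule: less_induct)
  case less
  show ?case
  proof (cases "saturated B")
    case True
    with less.prems show ?thesis
      by auto
  next
    case False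
    then obtain B1 where B1: "B \<subseteq> B1" "B1 \<subseteq> U" "card B1 \<le> card B + m" "ntypes B < ntypes B1"
      using exists_ntypes_increase[OF less.prems False] by blast
    have fewer: "lambda1 U n R - ntypes B1 < lambda1 U n R - ntypes B"
      using ntypes_le_lambda1[OF B1(2)] B1(4) by linarith
    obtain B' where B': "B1 \<subseteq> B'" "B' \<subseteq> U" "saturated B'"
      "card B' \<le> card B1 + m * (lambda1 U n R - ntypes B1)"
      using less.hyps[OF fewer B1(2) params_bounded_mono[OF less.prems(2) B1(1)]] by blast
    have "m * (lambda1 U n R - ntypes B1 + 1) \<le> m * (lambda1 U n R - ntypes B)"
      using fewer by (intro mult_le_mono2) linarith
    with B'(4) B1(3) have "card B' \<le> card B + m * (lambda1 U n R - ntypes B)"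
      by (simp add: algebra_simps)
    with B1(1) B' show ?thesis
      by blast
  qed
qed

lemma card_small_classes_le: "card (small_classes m B) \<le> m * ntypes B"
proof -
  let ?T = "(\<lambda>a. tp a B) ` (U - B)"
  have split: "small_classes m B = (\<Union>\<tau>\<in>?T. {x \<in> small_classes m B. tp x B = \<tau>})"
    by (auto simp: small_classes_def)
  have fibre: "card {x \<in> small_classes m B. tp x B = \<tau>} \<le> m" for \<tau>
  proof (cases "\<exists>x\<^sub>0 \<in> small_classes m B. tp x\<^sub>0 B = \<tau>")
    case True
    then obtain x\<^sub>0 where x\<^sub>0: "x\<^sub>0 \<in> small_classes m B" "tp x\<^sub>0 B = \<tau>"
      by blast
    then have "{x \<in> small_classes m B. tp x B = \<tau>} \<subseteq> tp_class B x\<^sub>0"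
      by (auto simp: small_classes_def tp_class_def)
    moreover have "finite (tp_class B x\<^sub>0)"
      using finite_U by (simp add: tp_class_def)
    ultimately have "card {x \<in> small_classes m B. tp x B = \<tau>} \<le> card (tp_class B x\<^sub>0)"
      by (rule card_mono[rotated])
    also have "\<dots> \<le> m"
      using x\<^sub>0(1) by (simp add: small_classes_def)
    finally show ?thesis .
  next
    case False
    then have "{x \<in> small_classes m B. tp x B = \<tau>} = {}"
      by blast
    then show ?thesis
      by (metis card.empty le0)
  qed
  have "card (small_classes m B) = card (\<Union>\<tau>\<in>?T. {x \<in> small_classes m B. tp x B = \<tau>})"
    by (rule arg_cong[where f = card, OF split])
  also have "\<dots> \<le> (\<Sum>\<tau>\<in>?T. card {x \<in> small_classes m B. tp x B = \<tau>})"
    using finite_U by (intro card_UN_le) simp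
  also have "\<dots> \<le> (\<Sum>\<tau>\<in>?T. m)"
    by (intro sum_mono fibre)
  finally show ?thesis
    by (simp add: ntypes_def mult.commute)
qed

lemma params_bounded_absorb_small_classes:
  assumes "params_bounded B (Suc m)" and "saturated B"
  shows "params_bounded (B \<union> small_classes (Suc m) B) m"
  unfolding params_bounded_def
proof (intro allI impI)
  fix u v \<psi>
  let ?B' = "B \<union> small_classes (Suc m) B"
  assume u: "u \<in> U - ?B'" and v: "v \<in> tp_class ?B' u" and sep: "separates u v \<psi>"
  from v have "v \<in> U - B" and "tp v ?B' = tp u ?B'"
    by (auto simp: tp_class_def)
  then have "v \<in> tp_class B u"
    using tp_bs_eq_mono[of B ?B' n R v u] by (simp add: tp_class_def)
  moreover have "u \<in> U - B"
    using u by blast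
  ultimately have bound: "card (lit_params \<psi> - B) \<le> Suc m"
    and "\<exists>w \<in> lit_params \<psi> - B. tp_class B w \<subseteq> lit_params \<psi> - B"
    using assms sep by (simp_all add: params_bounded_def saturated_def)
  then obtain w where w: "w \<in> lit_params \<psi> - B" "tp_class B w \<subseteq> lit_params \<psi> - B"
    by blast
  have finite: "finite (lit_params \<psi> - B)"
    using finite_lit_params by blast
  have "w \<in> small_classes (Suc m) B"
  proof -
    have "w \<in> U"
      using w(1) sep by (auto simp: separates_def)
    moreover have "card (tp_class B w) \<le> Suc m"
      using card_mono[OF finite w(2)] bound by linarith
    ultimately show ?thesis
      using w(1) by (simp add: small_classes_def)
  qed
  then have "lit_params \<psi> - ?B' \<subseteq> (lit_params \<psi> - B) - {w}"
    by blast
  then have "card (lit_params \<psi> - ?B') \<le> card ((lit_params \<psi> - B) - {w})"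
    using finite by (intro card_mono) auto
  also have "\<dots> = card (lit_params \<psi> - B) - 1"
    using w(1) by (simp add: card_Diff_singleton)
  finally show "card (lit_params \<psi> - ?B') \<le> m"
    using bound by linarith
qed

lemma exists_params_bounded_0:
  assumes "B \<subseteq> U" and "params_bounded B m"
  shows "\<exists>B'. B \<subseteq> B' \<and> B' \<subseteq> U \<and> params_bounded B' 0 \<and> card B' \<le> card B + m * (m + 1) * lambda1 U n R"
  using assms
proof (induction m arbitrary: B)
  case 0
  then show ?case
    by auto
next
  case (Suc m)
  obtain B1 where B1: "B \<subseteq> B1" "B1 \<subseteq> U" "saturated B1"
    "card B1 \<le> card B + Suc m * (lambda1 U n R - ntypes B)"
    using exists_saturated_superset[OF Suc.prems] by blast
  define B2 where "B2 = B1 \<union> small_classes (Suc m) B1"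
  have "params_bounded B2 m"
    unfolding B2_def
    by (rule params_bounded_absorb_small_classes[OF params_bounded_mono[OF Suc.prems(2) B1(1)] B1(3)])
  moreover have "B2 \<subseteq> U"
    using B1(2) by (auto simp: B2_def small_classes_def)
  ultimately obtain B' where B': "B2 \<subseteq> B'" "B' \<subseteq> U" "params_bounded B' 0"
    "card B' \<le> card B2 + m * (m + 1) * lambda1 U n R"
    using Suc.IH by meson
  have "card B2 \<le> card B1 + card (small_classes (Suc m) B1)"
    unfolding B2_def by (rule card_Un_le)
  also have "\<dots> \<le> card B1 + Suc m * ntypes B1"
    by (rule add_left_mono[OF card_small_classes_le])
  also have "\<dots> \<le> card B1 + Suc m * lambda1 U n R"
    by (intro add_left_mono mult_le_mono2 ntypes_le_lambda1[OF B1(2)])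
  finally have "card B2 \<le> card B + 2 * (Suc m * lambda1 U n R)"
    using B1(4) mult_le_mono2[of "lambda1 U n R - ntypes B" "lambda1 U n R" "Suc m"] by linarith
  with B'(4) have "card B' \<le> card B + Suc m * (Suc m + 1) * lambda1 U n R"
    by (simp add: algebra_simps)
  with B1(1) B' show ?case
    by (auto simp: B2_def)
qed

lemma large_indiscernible_class:
  assumes "params_bounded B 0" and "(x, y) \<in> E_rel U n R (B \<union> small_classes n B)" and "x \<noteq> y"
  shows "\<exists>X \<subseteq> U. n < card X \<and> x \<in> X \<and> y \<in> X \<and> (\<forall>p\<in>X. \<forall>q\<in>X. indiscernible p q)"
proof -
  let ?A = "B \<union> small_classes n B"
  have "x \<in> U" "y \<in> U" and same_tp: "tp x ?A = tp y ?A"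
    using assms(2) by (auto simp: E_rel_def)
  have "x \<notin> ?A" "y \<notin> ?A"
    using tp_bs_eq_imp_eq[of _ ?A n R] same_tp \<open>x \<noteq> y\<close> by metis+
  define X where "X = tp_class B x"
  have "X \<subseteq> U"
    by (auto simp: X_def tp_class_def)
  moreover have "x \<in> X" and "y \<in> X"
    using \<open>x \<in> U\<close> \<open>y \<in> U\<close> \<open>x \<notin> ?A\<close> \<open>y \<notin> ?A\<close> tp_bs_eq_mono[of B ?A n R y x] same_tp
    by (auto simp: X_def tp_class_def)
  moreover have "n < card X"
    using \<open>x \<in> U\<close> \<open>x \<notin> ?A\<close> by (auto simp: small_classes_def X_def)
  moreover have "indiscernible p q" if "p \<in> X" and "q \<in> X" for p q
  proof (rule params_bounded_0_imp_indiscernible[OF assms(1)])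
    show "p \<in> U - B" and "q \<in> tp_class B p"
      using that by (auto simp: X_def tp_class_def)
  qed
  ultimately show ?thesis
    by blast
qed

lemma exists_base_with_large_indiscernible_classes:
  obtains A where "A \<subseteq> U" and "card A \<le> n * n * lambda1 U n R"
    and "\<And>x y. (x, y) \<in> E_rel U n R A \<Longrightarrow> x \<noteq> y \<Longrightarrow>
           \<exists>X \<subseteq> U. n < card X \<and> x \<in> X \<and> y \<in> X \<and> (\<forall>p\<in>X. \<forall>q\<in>X. indiscernible p q)"
proof -
  obtain B where B: "B \<subseteq> U" "params_bounded B 0"
    and card_B: "card B \<le> (n - 1) * (n - 1 + 1) * lambda1 U n R"
    using exists_params_bounded_0[OF empty_subsetI params_bounded_empty] by auto
  define A where "A = B \<union> small_classes n B"
  have "A \<subseteq> U"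
    using B(1) by (auto simp: A_def small_classes_def)
  moreover have "card A \<le> n * n * lambda1 U n R"
  proof -
    have "card A \<le> card B + card (small_classes n B)"
      unfolding A_def by (rule card_Un_le)
    also have "\<dots> \<le> card B + n * lambda1 U n R"
      using card_small_classes_le ntypes_le_lambda1[OF B(1)]
      by (meson add_left_mono mult_le_mono2 order_trans)
    also have "\<dots> \<le> n * n * lambda1 U n R"
      using card_B by (cases n) (simp_all add: algebra_simps)
    finally show ?thesis .
  qed
  ultimately show ?thesis
    using that large_indiscernible_class[OF B(2)] unfolding A_def by blast
qed

lemma mem_R_iff_transpose_fresh:
  assumes "indiscernible a b" and "b \<notin> set t" and "set t \<subseteq> U" and "length t = n"
  shows "t \<in> R \<longleftrightarrow> map (transpose a b) t \<in> R"
proof -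
  define ts where "ts = map (\<lambda>x. if x = a then Var else Par x) t"
  define \<psi> where "\<psi> = Pos (Rel ts)"
  have "lit_wf n \<psi>"
    using assms(4) by (simp add: \<psi>_def ts_def)
  moreover have "lit_params \<psi> \<subseteq> U - {a, b}"
    using assms(2,3) by (auto simp: \<psi>_def ts_def atom_params_Rel)
  ultimately have "lit_holds R a \<psi> \<longleftrightarrow> lit_holds R b \<psi>"
    using assms(1) by (auto simp: indiscernible_def separates_def)
  moreover have "map (tm_val a) ts = t"
    unfolding ts_def by (induction t) auto
  moreover have "map (tm_val b) ts = map (transpose a b) t"
    unfolding ts_def using assms(2) by (induction t) auto
  ultimately show ?thesis
    by (simp add: \<psi>_def)
qed

lemma mem_R_iff_transpose_via:
  assumes "indiscernible u w" and "indiscernible v u" and "indiscernible w v"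
    and "w \<notin> set t" and "w \<noteq> u" and "w \<noteq> v" and "u \<in> U" and "v \<in> U" and "w \<in> U"
    and t: "set t \<subseteq> U" "length t = n"
  shows "t \<in> R \<longleftrightarrow> map (transpose u v) t \<in> R"
proof -
  \<comment> \<open>transpose u v = transpose w v \<circ> transpose v u \<circ> transpose u w, and each factor moves
    an element onto one that is absent from the tuple it acts on\<close>
  define t\<^sub>1 where "t\<^sub>1 = map (transpose u w) t"
  define t\<^sub>2 where "t\<^sub>2 = map (transpose v u) t\<^sub>1"
  have t\<^sub>1: "set t\<^sub>1 \<subseteq> U" "length t\<^sub>1 = n" "u \<notin> set t\<^sub>1"
    using assms by (auto simp: t\<^sub>1_def set_map_transpose_subset) (auto simp: transpose_def split: if_splits)
  have t\<^sub>2: "set t\<^sub>2 \<subseteq> U" "length t\<^sub>2 = n" "v \<notin> set t\<^sub>2"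
    using assms t\<^sub>1 by (auto simp: t\<^sub>2_def set_map_transpose_subset) (auto simp: transpose_def split: if_splits)
  have "t \<in> R \<longleftrightarrow> t\<^sub>1 \<in> R"
    unfolding t\<^sub>1_def by (rule mem_R_iff_transpose_fresh[OF assms(1,4) t])
  also have "\<dots> \<longleftrightarrow> t\<^sub>2 \<in> R"
    unfolding t\<^sub>2_def by (rule mem_R_iff_transpose_fresh[OF assms(2) t\<^sub>1(3,1,2)])
  also have "\<dots> \<longleftrightarrow> map (transpose w v) t\<^sub>2 \<in> R"
    by (rule mem_R_iff_transpose_fresh[OF assms(3) t\<^sub>2(3,1,2)])
  also have "map (transpose w v) t\<^sub>2 = map (transpose u v) t"
    using assms(5,6) by (auto simp: t\<^sub>1_def t\<^sub>2_def transpose_def)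
  finally show ?thesis .
qed

lemma mem_R_iff_transpose:
  assumes "X \<subseteq> U" and "n < card X" and indisc: "\<forall>p\<in>X. \<forall>q\<in>X. indiscernible p q"
    and "u \<in> X" and "v \<in> X" and t: "set t \<subseteq> U" "length t = n"
  shows "t \<in> R \<longleftrightarrow> map (transpose u v) t \<in> R"
proof -
  have "\<not> X \<subseteq> set t"
  proof
    assume "X \<subseteq> set t"
    then have "card X \<le> card (set t)"
      by (intro card_mono) auto
    with assms(2) t(2) card_length[of t] show False
      by linarith
  qed
  then obtain w where "w \<in> X" and "w \<notin> set t"
    by blast
  consider "w = v" | "w = u" | "w \<noteq> u" "w \<noteq> v"
    by blast
  then show ?thesis
  proof cases
    case 1
    with \<open>w \<notin> set t\<close> show ?thesis
      using mem_R_iff_transpose_fresh indisc assms(4,5) t by blast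
  next
    case 2
    with \<open>w \<notin> set t\<close> show ?thesis
      using mem_R_iff_transpose_fresh[of v u t] indisc assms(4,5) t by (simp add: transpose_commute)
  next
    case 3
    with \<open>w \<in> X\<close> \<open>w \<notin> set t\<close> show ?thesis
      using assms(1,4,5) indisc t by (intro mem_R_iff_transpose_via) auto
  qed
qed

lemma card_quotient_E_rel_le:
  assumes "A \<subseteq> U"
  shows "card (U // E_rel U n R A) \<le> card A + lambda1 U n R"
proof -
  let ?class = "\<lambda>x. E_rel U n R A `` {x}"
  have class_eq: "?class x = {y \<in> U. tp y A = tp x A}" if "x \<in> U" for x
    using that by (auto simp: E_rel_def)
  have "U // E_rel U n R A = ?class ` A \<union> ?class ` (U - A)"
    using assms by (auto simp: quotient_def)
  then have "card (U // E_rel U n R A) \<le> card (?class ` A) + card (?class ` (U - A))"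
    by (simp add: card_Un_le)
  also have "card (?class ` A) \<le> card A"
    using assms finite_U by (intro card_image_le) (auto intro: finite_subset)
  also have "?class ` (U - A) = (\<lambda>\<tau>. {y \<in> U. tp y A = \<tau>}) ` (\<lambda>x. tp x A) ` (U - A)"
    using class_eq by (auto simp: image_image)
  also have "card \<dots> \<le> ntypes A"
    unfolding ntypes_def using finite_U by (intro card_image_le) simp
  also have "\<dots> \<le> lambda1 U n R"
    by (rule ntypes_le_lambda1[OF assms])
  finally show ?thesis
    by simp
qed

lemma mem_R_iff_if_pointwise_E_rel:
  assumes large: "\<And>x y. (x, y) \<in> E_rel U n R A \<Longrightarrow> x \<noteq> y \<Longrightarrow>
           \<exists>X \<subseteq> U. n < card X \<and> x \<in> X \<and> y \<in> X \<and> (\<forall>p\<in>X. \<forall>q\<in>X. indiscernible p q)"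
  shows "length b = n \<Longrightarrow> length c = n \<Longrightarrow> set b \<subseteq> U \<Longrightarrow> set c \<subseteq> U
    \<Longrightarrow> \<forall>i<n. \<forall>j<n. b ! i = b ! j \<longleftrightarrow> c ! i = c ! j \<Longrightarrow> \<forall>i<n. (b ! i, c ! i) \<in> E_rel U n R A
    \<Longrightarrow> b \<in> R \<longleftrightarrow> c \<in> R"
proof (rule transposition_invariant_imp_pattern_invariant[where P = "\<lambda>t. t \<in> R"])
  show "trans (E_rel U n R A)"
    by (auto intro: transI simp: E_rel_def)
  show "refl_on U (E_rel U n R A)"
    by (auto simp: refl_on_def E_rel_def)
  show "t \<in> R \<longleftrightarrow> map (transpose u v) t \<in> R"
    if t: "length t = n" "set t \<subseteq> U" and related: "(u, v) \<in> E_rel U n R A" for t u v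
  proof (cases "u = v")
    case True
    then show ?thesis
      by simp
  next
    case False
    obtain X where "X \<subseteq> U" "n < card X" "u \<in> X" "v \<in> X"
      and "\<forall>p\<in>X. \<forall>q\<in>X. indiscernible p q"
      using large[OF related False] by blast
    with t show ?thesis
      by (intro mem_R_iff_transpose) auto
  qed
qed

end

theorem lemma3p4:
  fixes U :: "'a set" and n :: nat and R :: "'a list set"
  assumes "finite U"
    and "is_relation U n R"
    and "lambda1 U n R * n ^ 2 + n < card U"
  shows "\<exists>A C. A \<subseteq> U \<and> (\<forall>l < n - 2. C l \<subseteq> U)
     \<and> card A \<le> n * n * lambda1 U n R
     \<and> (\<forall>b c. length b = n \<and> length c = n \<and> set b \<subseteq> U \<and> set c \<subseteq> U
           \<and> (\<forall>i<n. \<forall>j<n. b ! i = b ! j \<longleftrightarrow> c ! i = c ! j)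
           \<and> (\<forall>i<n. (b ! i, c ! i) \<in> E_rel_C U n R A (n - 2) C)
           \<longrightarrow> (b \<in> R \<longleftrightarrow> c \<in> R))
     \<and> card (U // E_rel U n R A) \<le> card A + lambda1 U n R
     \<and> (\<forall>l < n - 2. card (C l) \<le> lambda1 U n R)"
proof -
  interpret finite_universe U n R
    by unfold_locales (rule assms(1))
  obtain A where A: "A \<subseteq> U" "card A \<le> n * n * lambda1 U n R"
    and large: "\<And>x y. (x, y) \<in> E_rel U n R A \<Longrightarrow> x \<noteq> y \<Longrightarrow>
           \<exists>X \<subseteq> U. n < card X \<and> x \<in> X \<and> y \<in> X \<and> (\<forall>p\<in>X. \<forall>q\<in>X. indiscernible p q)"
    by (rule exists_base_with_large_indiscernible_classes) blast
  have "E_rel_C U n R A (n - 2) (\<lambda>_. {}) = E_rel U n R A"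
    by (auto simp: E_rel_C_def)
  with A mem_R_iff_if_pointwise_E_rel[OF large] card_quotient_E_rel_le[OF A(1)] show ?thesis
    by (intro exI[of _ A] exI[of _ "\<lambda>_. {}"]) auto
qed

end
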